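(* For all $x$ with $|x|<1/4$, \[ \sum_{n=0}^\infty\binom{4n}{2n}O_{2n}x^{2n}=-\frac{\sqrt{1+4x}\,\ln(1-4x)+\sqrt{1-4x}\,\ln(1+4x)}{4\sqrt{1-16x^2}} \] and \[ \sum_{n=0}^\infty\binom{4n+2}{2n+1}O_{2n+1}x^{2n+1}=-\frac{\sqrt{1+4x}\,\ln(1-4x)-\sqrt{1-4x}\,\ln(1+4x)}{4\sqrt{1-16x^2}}. \]
   Context: $O_n=\sum_{j=1}^n\frac1{2j-1}$ is the $n$th odd harmonic number ($O_0=0$). *)

theory Defs
  imports Complex_Main
begin

definition odd_harmonic :: "nat \<Rightarrow> real" where
  "odd_harmonic n = (\<Sum>j=1..n. 1 / (2 * real j - 1))"

end

(*
  Let F(x) = sum C(2n,n) O_n x^n. It is the Cauchy product of the series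
  L(x) = -ln(1 - 4x)/2 = sum 4^n/(2n) x^n and B(x) = (1 - 4x)^(-1/2) = sum C(2n,n) x^n:
  from (1 - 4x) L' = 2 and (1 - 4x) B' = 2B, the product satisfies
  (1 - 4x) (LB)' = 2 LB + 2B, and so does F, because O_(n+1) = O_n + 1/(2n+1)
  turns this differential equation into the recurrence of the coefficients C(2n,n) O_n.
  Both vanish at 0, hence F = LB. The two identities are the even and odd parts
  (F(x) + F(-x))/2 and (F(x) - F(-x))/2, using sqrt(1 - 16x^2) = sqrt(1 - 4x) sqrt(1 + 4x).
*)
theory Submission
  imports Defs "HOL-Computational_Algebra.Formal_Power_Series" "HOL-Analysis.Generalised_Binomial_Theorem"
begin

lemma central_binomial_Suc:
  "of_nat (Suc n) * of_nat ((2 * Suc n) choose Suc n)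
     = (4 * of_nat n + 2 :: 'a :: comm_semiring_1) * of_nat ((2 * n) choose n)"
proof -
  have "Suc n * ((2 * Suc n) choose Suc n) = Suc (2 * n + 1) * ((2 * n + 1) choose n)"
    using Suc_times_binomial[of n "2 * n + 1"] by simp
  also have "(2 * n + 1) choose n = (2 * n + 1) choose Suc n"
    using binomial_symmetric[of n "2 * n + 1"] by simp
  also have "Suc (2 * n + 1) * ((2 * n + 1) choose Suc n) = 2 * (Suc n * (Suc (2 * n) choose Suc n))"
    by simp
  also have "Suc n * (Suc (2 * n) choose Suc n) = (2 * n + 1) * ((2 * n) choose n)"
    using Suc_times_binomial[of n "2 * n"] by simp
  finally have "Suc n * ((2 * Suc n) choose Suc n) = (4 * n + 2) * ((2 * n) choose n)"
    by simp
  then have "of_nat (Suc n * ((2 * Suc n) choose Suc n)) = (of_nat ((4 * n + 2) * ((2 * n) choose n)) :: 'a)"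
    by (rule arg_cong)
  then show ?thesis
    by (simp only: of_nat_mult of_nat_add of_nat_numeral)
qed

lemma gbinomial_minus_half:
  "((- 1 / 2 :: 'a :: field_char_0) gchoose n) * (- 4) ^ n = of_nat ((2 * n) choose n)"
proof (induction n)
  case 0
  show ?case by simp
next
  case (Suc n)
  have rec: "of_nat (Suc n) * ((- 1 / 2 :: 'a) gchoose Suc n) = (- 1 / 2 - of_nat n) * ((- 1 / 2) gchoose n)"
    using gbinomial_mult_1[of "- 1 / 2 :: 'a" n] by (simp add: algebra_simps)
  have "of_nat (Suc n) * (((- 1 / 2 :: 'a) gchoose Suc n) * (- 4) ^ Suc n)
      = (of_nat (Suc n) * ((- 1 / 2 :: 'a) gchoose Suc n)) * (- 4) * (- 4) ^ n"
    by (simp add: algebra_simps)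
  also have "\<dots> = (4 * of_nat n + 2) * (((- 1 / 2) gchoose n) * (- 4) ^ n)"
    unfolding rec by (simp add: field_simps)
  also have "\<dots> = of_nat (Suc n) * of_nat ((2 * Suc n) choose Suc n)"
    by (simp only: Suc.IH central_binomial_Suc)
  finally show ?case
    by (simp only: mult_cancel_left of_nat_eq_0_iff Suc_not_Zero simp_thms)
qed

lemma central_binomial_series:
  fixes x :: real
  assumes "\<bar>x\<bar> < 1/4"
  shows "(\<lambda>n. real ((2 * n) choose n) * x ^ n) sums (1 / sqrt (1 - 4 * x))"
proof -
  have "(\<lambda>n. ((- 1 / 2) gchoose n) * (- 4 * x) ^ n) sums (1 + - 4 * x) powr (- 1 / 2)"
    using assms by (intro gen_binomial_real) simp
  moreover have "((- 1 / 2) gchoose n) * (- 4 * x) ^ n = real ((2 * n) choose n) * x ^ n" for n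
    by (simp only: power_mult_distrib mult.assoc [symmetric] gbinomial_minus_half)
  moreover have "(1 + - 4 * x) powr (- 1 / 2) = 1 / sqrt (1 - 4 * x)"
    using assms by (simp add: powr_minus_divide powr_half_sqrt)
  ultimately show ?thesis by simp
qed

(* At n = 0 the coefficient is 4^0 / 0 = 0 in HOL, which is the vanishing constant term. *)
lemma ln_one_minus_four_series:
  fixes x :: real
  assumes "\<bar>x\<bar> < 1/4"
  shows "(\<lambda>n. 4 ^ n / (2 * real n) * x ^ n) sums (- ln (1 - 4 * x) / 2)"
proof -
  have "(\<lambda>n. - ((4 * x) ^ n) / real n) sums ln (1 - 4 * x)"
    using ln_series'[of "- 4 * x"] assms by simp
  from sums_divide[OF this, of "- 2"] show ?thesis
    by (simp add: power_mult_distrib ac_simps)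
qed

lemma odd_harmonic_Suc: "odd_harmonic (Suc n) = odd_harmonic n + 1 / (2 * real n + 1)"
  unfolding odd_harmonic_def by (simp add: algebra_simps)

lemma central_binomial_odd_harmonic_Suc:
  "real (Suc n) * (real ((2 * Suc n) choose Suc n) * odd_harmonic (Suc n))
     = (4 * real n + 2) * (real ((2 * n) choose n) * odd_harmonic n) + 2 * real ((2 * n) choose n)"
proof -
  have "real (Suc n) * (real ((2 * Suc n) choose Suc n) * odd_harmonic (Suc n))
      = (real (Suc n) * real ((2 * Suc n) choose Suc n)) * (odd_harmonic n + 1 / (2 * real n + 1))"
    by (simp only: odd_harmonic_Suc mult.assoc)
  also have "\<dots> = 2 * (2 * real n + 1) * real ((2 * n) choose n) * (odd_harmonic n + 1 / (2 * real n + 1))"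
    by (simp only: central_binomial_Suc) simp
  also have "\<dots> = (4 * real n + 2) * (real ((2 * n) choose n) * odd_harmonic n) + 2 * real ((2 * n) choose n)"
    by (simp add: field_simps)
  finally show ?thesis .
qed

lemma fps_nth_one_minus_X_mult_deriv:
  fixes F :: "'a :: comm_ring_1 fps"
  shows "fps_nth ((1 - fps_const c * fps_X) * fps_deriv F) n
     = of_nat (Suc n) * fps_nth F (Suc n) - c * of_nat n * fps_nth F n"
  by (cases n) (simp_all add: algebra_simps)

lemma fps_linear_ode_unique:
  fixes F G R :: "'a :: field_char_0 fps"
  assumes "(1 - fps_const c * fps_X) * fps_deriv F = fps_const a * F + R"
    and "(1 - fps_const c * fps_X) * fps_deriv G = fps_const a * G + R"
    and "fps_nth F 0 = fps_nth G 0"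
  shows "F = G"
proof -
  define H where "H = F - G"
  have "(1 - fps_const c * fps_X) * fps_deriv H
      = (1 - fps_const c * fps_X) * fps_deriv F - (1 - fps_const c * fps_X) * fps_deriv G"
    by (simp add: H_def right_diff_distrib)
  also have "\<dots> = fps_const a * H"
    by (simp add: assms(1,2) H_def right_diff_distrib)
  finally have ode: "(1 - fps_const c * fps_X) * fps_deriv H = fps_const a * H" .
  have "fps_nth H n = 0" for n
  proof (induction n)
    case 0
    show ?case using assms(3) by (simp add: H_def)
  next
    case (Suc n)
    have "of_nat (Suc n) * fps_nth H (Suc n) - c * of_nat n * fps_nth H n = a * fps_nth H n"
      using arg_cong[OF ode, of "\<lambda>F. fps_nth F n"]
      by (simp only: fps_nth_one_minus_X_mult_deriv fps_mult_left_const_nth)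
    with Suc.IH show ?case by (simp del: of_nat_Suc)
  qed
  then show ?thesis by (simp add: H_def fps_ext)
qed

lemma ln_times_central_binomial_fps:
  "Abs_fps (\<lambda>n. 4 ^ n / (2 * real n)) * Abs_fps (\<lambda>n. real ((2 * n) choose n))
     = Abs_fps (\<lambda>n. real ((2 * n) choose n) * odd_harmonic n)"
proof -
  define L where "L = Abs_fps (\<lambda>n. 4 ^ n / (2 * real n))"
  define B where "B = Abs_fps (\<lambda>n. real ((2 * n) choose n))"
  define D where "D = Abs_fps (\<lambda>n. real ((2 * n) choose n) * odd_harmonic n)"
  note coeff = fps_nth_one_minus_X_mult_deriv fps_nth_Abs_fps fps_mult_left_const_nth
  have L: "(1 - fps_const 4 * fps_X) * fps_deriv L = fps_const 2"
    by (rule fps_ext) (simp add: coeff L_def field_simps)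
  (* simp only: the simplifier would unfold (2 * Suc n) choose Suc n with binomial_Suc_Suc *)
  have B: "(1 - fps_const 4 * fps_X) * fps_deriv B = fps_const 2 * B"
    by (rule fps_ext) (simp only: coeff B_def central_binomial_Suc, simp add: algebra_simps)
  have D: "(1 - fps_const 4 * fps_X) * fps_deriv D = fps_const 2 * D + fps_const 2 * B"
    by (rule fps_ext)
      (simp only: coeff fps_add_nth D_def B_def central_binomial_odd_harmonic_Suc, simp add: algebra_simps)
  have "(1 - fps_const 4 * fps_X) * fps_deriv (L * B)
      = ((1 - fps_const 4 * fps_X) * fps_deriv L) * B + L * ((1 - fps_const 4 * fps_X) * fps_deriv B)"
    by (simp add: algebra_simps)
  also have "\<dots> = fps_const 2 * (L * B) + fps_const 2 * B"
    by (simp only: L B) (simp add: algebra_simps)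
  finally have LB: "(1 - fps_const 4 * fps_X) * fps_deriv (L * B) = fps_const 2 * (L * B) + fps_const 2 * B" .
  have "fps_nth (L * B) 0 = fps_nth D 0"
    by (simp add: L_def D_def odd_harmonic_def)
  from fps_linear_ode_unique[OF LB D this] show ?thesis
    by (simp only: L_def B_def D_def)
qed

lemma central_binomial_odd_harmonic_series:
  fixes x :: real
  assumes "\<bar>x\<bar> < 1/4"
  shows "(\<lambda>n. real ((2 * n) choose n) * odd_harmonic n * x ^ n)
           sums (- ln (1 - 4 * x) / (2 * sqrt (1 - 4 * x)))"
proof -
  define l where "l n = 4 ^ n / (2 * real n)" for n
  define b where "b n = real ((2 * n) choose n)" for n
  have l_sums: "(\<lambda>n. l n * y ^ n) sums (- ln (1 - 4 * y) / 2)" if "\<bar>y\<bar> < 1/4" for y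
    unfolding l_def using that by (rule ln_one_minus_four_series)
  have b_sums: "(\<lambda>n. b n * y ^ n) sums (1 / sqrt (1 - 4 * y))" if "\<bar>y\<bar> < 1/4" for y
    unfolding b_def using that by (rule central_binomial_series)
  have "summable (\<lambda>n. norm (l n * x ^ n))"
    using sums_summable[OF l_sums[of "\<bar>x\<bar>"]] assms by (simp add: l_def abs_mult power_abs)
  moreover have "summable (\<lambda>n. norm (b n * x ^ n))"
    using sums_summable[OF b_sums[of "\<bar>x\<bar>"]] assms by (simp add: b_def abs_mult power_abs)
  ultimately have "(\<lambda>n. \<Sum>i\<le>n. l i * x ^ i * (b (n - i) * x ^ (n - i)))
                     sums ((\<Sum>n. l n * x ^ n) * (\<Sum>n. b n * x ^ n))"
    by (rule Cauchy_product_sums)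
  moreover have "(\<Sum>i\<le>n. l i * x ^ i * (b (n - i) * x ^ (n - i)))
               = real ((2 * n) choose n) * odd_harmonic n * x ^ n" for n
  proof -
    have "(\<Sum>i\<le>n. l i * x ^ i * (b (n - i) * x ^ (n - i))) = (\<Sum>i\<le>n. l i * b (n - i)) * x ^ n"
      unfolding sum_distrib_right by (intro sum.cong refl) (simp add: power_add [symmetric] mult_ac)
    also have "(\<Sum>i\<le>n. l i * b (n - i)) = real ((2 * n) choose n) * odd_harmonic n"
      using arg_cong[OF ln_times_central_binomial_fps, of "\<lambda>F. fps_nth F n"]
      by (simp add: fps_mult_nth atLeast0AtMost l_def b_def)
    finally show ?thesis .
  qed
  moreover have "(\<Sum>n. l n * x ^ n) * (\<Sum>n. b n * x ^ n) = - ln (1 - 4 * x) / (2 * sqrt (1 - 4 * x))"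
    using sums_unique[OF l_sums[OF assms], symmetric] sums_unique[OF b_sums[OF assms], symmetric]
    by simp
  ultimately show ?thesis by simp
qed

lemma power_series_even_part:
  fixes a :: "nat \<Rightarrow> 'a :: real_normed_field"
  assumes "(\<lambda>n. a n * x ^ n) sums S" and "(\<lambda>n. a n * (- x) ^ n) sums T"
  shows "(\<lambda>n. a (2 * n) * x ^ (2 * n)) sums ((S + T) / 2)"
proof -
  let ?f = "\<lambda>n. (a n * x ^ n + a n * (- x) ^ n) / 2"
  have "?f sums ((S + T) / 2)"
    using sums_divide[OF sums_add[OF assms]] .
  moreover have "?f n = 0" if "n \<notin> range (\<lambda>n. 2 * n)" for n
  proof -
    have "odd n" using that by (metis evenE rangeI)
    then show ?thesis by (simp add: power_minus_odd)
  qed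
  ultimately have "(\<lambda>n. ?f (2 * n)) sums ((S + T) / 2)"
    using sums_mono_reindex[of "\<lambda>n. 2 * n" ?f] by (simp add: strict_mono_def)
  moreover have "?f (2 * n) = a (2 * n) * x ^ (2 * n)" for n
    by simp
  ultimately show ?thesis by (simp only:)
qed

lemma power_series_odd_part:
  fixes a :: "nat \<Rightarrow> 'a :: real_normed_field"
  assumes "(\<lambda>n. a n * x ^ n) sums S" and "(\<lambda>n. a n * (- x) ^ n) sums T"
  shows "(\<lambda>n. a (2 * n + 1) * x ^ (2 * n + 1)) sums ((S - T) / 2)"
proof -
  let ?f = "\<lambda>n. (a n * x ^ n - a n * (- x) ^ n) / 2"
  have "?f sums ((S - T) / 2)"
    using sums_divide[OF sums_diff[OF assms]] .
  moreover have "?f n = 0" if "n \<notin> range (\<lambda>n. 2 * n + 1)" for n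
  proof -
    have "even n" using that by (metis oddE rangeI)
    then show ?thesis by (simp add: power_minus_even)
  qed
  ultimately have "(\<lambda>n. ?f (2 * n + 1)) sums ((S - T) / 2)"
    using sums_mono_reindex[of "\<lambda>n. 2 * n + 1" ?f] by (simp add: strict_mono_def)
  moreover have "?f (2 * n + 1) = a (2 * n + 1) * x ^ (2 * n + 1)" for n
    by (simp add: power_minus_odd)
  ultimately show ?thesis by (simp only:)
qed

theorem theorem24:
  fixes x :: real
  assumes "\<bar>x\<bar> < 1/4"
  shows "(\<lambda>n. real ((4*n) choose (2*n)) * odd_harmonic (2*n) * x ^ (2*n)) sums
           (- (sqrt (1 + 4*x) * ln (1 - 4*x) + sqrt (1 - 4*x) * ln (1 + 4*x))
              / (4 * sqrt (1 - 16 * x^2))) \<and>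
         (\<lambda>n. real ((4*n+2) choose (2*n+1)) * odd_harmonic (2*n+1) * x ^ (2*n+1)) sums
           (- (sqrt (1 + 4*x) * ln (1 - 4*x) - sqrt (1 - 4*x) * ln (1 + 4*x))
              / (4 * sqrt (1 - 16 * x^2)))"
proof -
  define S where "S = - ln (1 - 4 * x) / (2 * sqrt (1 - 4 * x))"
  define T where "T = - ln (1 + 4 * x) / (2 * sqrt (1 + 4 * x))"
  let ?a = "\<lambda>n. real ((2 * n) choose n) * odd_harmonic n"
  have S_sums: "(\<lambda>n. ?a n * x ^ n) sums S"
    using central_binomial_odd_harmonic_series[OF assms] by (simp add: S_def)
  have T_sums: "(\<lambda>n. ?a n * (- x) ^ n) sums T"
    using central_binomial_odd_harmonic_series[of "- x"] assms by (simp add: T_def)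
  have index: "2 * (2 * n) = 4 * n" "2 * (2 * n + 1) = 4 * n + 2" for n :: nat
    by simp_all
  have "0 < sqrt (1 - 4 * x)" "0 < sqrt (1 + 4 * x)"
    using assms by auto
  moreover have "sqrt (1 - 16 * x^2) = sqrt (1 - 4 * x) * sqrt (1 + 4 * x)"
    by (simp add: real_sqrt_mult [symmetric] algebra_simps power2_eq_square)
  ultimately have "(S + T) / 2 = - (sqrt (1 + 4*x) * ln (1 - 4*x) + sqrt (1 - 4*x) * ln (1 + 4*x))
                                   / (4 * sqrt (1 - 16 * x^2))"
    and "(S - T) / 2 = - (sqrt (1 + 4*x) * ln (1 - 4*x) - sqrt (1 - 4*x) * ln (1 + 4*x))
                          / (4 * sqrt (1 - 16 * x^2))"
    by (simp_all add: S_def T_def field_simps)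
  with power_series_even_part[OF S_sums T_sums] power_series_odd_part[OF S_sums T_sums]
  show ?thesis by (simp only: index)
qed

end
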